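(* Assume $n>R$. Then, for every realization of the sample, $$\sup_{f\in\mathcal F}\big|U_\Omega(f)-\bar U_\Omega(f)\big|\le\frac{2\mathcal BR}{n-R}+\sum_{r=1}^R\widehat\rho_r\sup_{f\in\mathcal F}\left|U_{\Omega_r}(f)-\frac{1}{N!}\sum_{\pi\in\Pi}U_{\Omega_r^\pi}(f)\right|.$$
   Context: Setup: Let $\mathcal X$ be a measurable space, $R\ge2$, $\rho=(\rho_1,\dots,\rho_R)$ a probability vector with all $\rho_r>0$, and $\mathcal D_1,\dots,\mathcal D_R$ distributions on $\mathcal X$; $\bar{\mathcal D}:=\sum_r\rho_r\mathcal D_r$. A labeled sample consists of $N$ i.i.d. pairs $(X_j,Y_j)$ with $\mathbb P(Y_j=r)=\rho_r$ and $X_j\mid Y_j=r\sim\mathcal D_r$; $S=(X_1,\dots,X_N)$, $N_r=|\{j:Y_j=r\}|$, $\widehat\rho_r=N_r/N$. Fix an integer $k\ge1$. $\mathcal F$ is a class of maps $f:\mathcal X\to\mathbb R^d$, $\phi:\mathbb R^k\to\mathbb R_+$, and $\ell_{\phi,f}(x,x^+,x_1^-,\dots,x_k^-):=\phi\big((f(x)^\top[f(x^+)-f(x_i^-)])_{i=1}^k\big)$, with $0\le\ell_{\phi,f}\le\mathcal B$ for all $f\in\mathcal F$. Natural estimator: $\Omega_r$ is the set of index tuples $(a,b,c_1,\dots,c_k)$ of pairwise distinct indices in $[N]$ with $Y_a=Y_b=r$ (negatives $c_i$ arbitrary); $U_{\Omega_r}(f)$ is the average of $\ell_{\phi,f}(X_a,X_b,X_{c_1},\dots,X_{c_k})$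 over $\Omega_r$ ($:=0$ if empty); $U_\Omega(f):=\sum_r\widehat\rho_rU_{\Omega_r}(f)$. Auxiliary estimator: $n:=2\lfloor N/(k+2)\rfloor$; $\Pi$ is the set of permutations of $[N]$; for $\pi\in\Pi$, $I_\pi=\{\pi(1),\dots,\pi(n)\}$, $n_r^\pi:=|\{j\in I_\pi:Y_j=r\}|$, $\Omega_r^\pi$ is the set of tuples $(a,b,c_1,\dots,c_k)$ of pairwise distinct indices with $a,b\in I_\pi$, $Y_a=Y_b=r$, $c_i\notin I_\pi$; $U_{\Omega_r^\pi}(f)$ is the corresponding average ($:=0$ if empty); $\omega_r^\pi:=\lfloor n_r^\pi/2\rfloor/\sum_q\lfloor n_q^\pi/2\rfloor$ ($:=0$ if denominator $0$); $\bar U_\Omega(f):=\frac1{N!}\sum_{\pi\in\Pi}\sum_r\omega_r^\pi U_{\Omega_r^\pi}(f)$. *)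

theory Defs
  imports "HOL-Analysis.Analysis" "HOL-Combinatorics.Permutations"
begin

text \<open>Sample indices are 0-based: [N] is rendered as {0..<N}. Labels Y j take values in {1..R}.
  A negative tuple (c_1,...,c_k) is a list of length k.\<close>

definition loss :: "(real list \<Rightarrow> real) \<Rightarrow> ('x \<Rightarrow> 'v::euclidean_space) \<Rightarrow> 'x \<Rightarrow> 'x \<Rightarrow> 'x list \<Rightarrow> real" where
  "loss phi f x xp xs = phi (map (\<lambda>z. inner (f x) (f xp - f z)) xs)"

definition avg_loss :: "(real list \<Rightarrow> real) \<Rightarrow> ('x \<Rightarrow> 'v::euclidean_space) \<Rightarrow> (nat \<Rightarrow> 'x)
    \<Rightarrow> (nat \<times> nat \<times> nat list) set \<Rightarrow> real" where
  "avg_loss phi f X S = (if S = {} then 0 else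
     (\<Sum>(a,b,c)\<in>S. loss phi f (X a) (X b) (map X c)) / real (card S))"

definition Omega_r :: "nat \<Rightarrow> nat \<Rightarrow> (nat \<Rightarrow> nat) \<Rightarrow> nat \<Rightarrow> (nat \<times> nat \<times> nat list) set" where
  "Omega_r N k Y r = {(a,b,c). a < N \<and> b < N \<and> length c = k \<and> set c \<subseteq> {0..<N}
      \<and> distinct (a # b # c) \<and> Y a = r \<and> Y b = r}"

definition rho_hat :: "nat \<Rightarrow> (nat \<Rightarrow> nat) \<Rightarrow> nat \<Rightarrow> real" where
  "rho_hat N Y r = real (card {j. j < N \<and> Y j = r}) / real N"

definition U_Omega :: "(real list \<Rightarrow> real) \<Rightarrow> ('x \<Rightarrow> 'v::euclidean_space) \<Rightarrow> nat \<Rightarrow> nat \<Rightarrow> nat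
    \<Rightarrow> (nat \<Rightarrow> 'x) \<Rightarrow> (nat \<Rightarrow> nat) \<Rightarrow> real" where
  "U_Omega phi f N k R X Y = (\<Sum>r=1..R. rho_hat N Y r * avg_loss phi f X (Omega_r N k Y r))"

definition n_aux :: "nat \<Rightarrow> nat \<Rightarrow> nat" where
  "n_aux N k = 2 * (N div (k + 2))"

text \<open>I_pi = {pi(1),...,pi(n)} in 1-based notation, i.e. pi ` {0..<n} here.\<close>
definition I_pi :: "nat \<Rightarrow> nat \<Rightarrow> (nat \<Rightarrow> nat) \<Rightarrow> nat set" where
  "I_pi N k \<pi> = \<pi> ` {0..<n_aux N k}"

definition n_r_pi :: "nat \<Rightarrow> nat \<Rightarrow> (nat \<Rightarrow> nat) \<Rightarrow> (nat \<Rightarrow> nat) \<Rightarrow> nat \<Rightarrow> nat" where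
  "n_r_pi N k Y \<pi> r = card {j \<in> I_pi N k \<pi>. Y j = r}"

definition Omega_r_pi :: "nat \<Rightarrow> nat \<Rightarrow> (nat \<Rightarrow> nat) \<Rightarrow> (nat \<Rightarrow> nat) \<Rightarrow> nat \<Rightarrow> (nat \<times> nat \<times> nat list) set" where
  "Omega_r_pi N k Y \<pi> r = {(a,b,c). a \<in> I_pi N k \<pi> \<and> b \<in> I_pi N k \<pi> \<and> length c = k
      \<and> set c \<subseteq> {0..<N} - I_pi N k \<pi> \<and> distinct (a # b # c) \<and> Y a = r \<and> Y b = r}"

definition omega_r_pi :: "nat \<Rightarrow> nat \<Rightarrow> nat \<Rightarrow> (nat \<Rightarrow> nat) \<Rightarrow> (nat \<Rightarrow> nat) \<Rightarrow> nat \<Rightarrow> real" where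
  "omega_r_pi N k R Y \<pi> r =
     (let D = (\<Sum>q=1..R. n_r_pi N k Y \<pi> q div 2) in
      if D = 0 then 0 else real (n_r_pi N k Y \<pi> r div 2) / real D)"

definition U_bar :: "(real list \<Rightarrow> real) \<Rightarrow> ('x \<Rightarrow> 'v::euclidean_space) \<Rightarrow> nat \<Rightarrow> nat \<Rightarrow> nat
    \<Rightarrow> (nat \<Rightarrow> 'x) \<Rightarrow> (nat \<Rightarrow> nat) \<Rightarrow> real" where
  "U_bar phi f N k R X Y = (1 / fact N) * (\<Sum>\<pi>\<in>{\<pi>. \<pi> permutes {0..<N}}.
      \<Sum>r=1..R. omega_r_pi N k R Y \<pi> r * avg_loss phi f X (Omega_r_pi N k Y \<pi> r))"

definition U_perm_avg :: "(real list \<Rightarrow> real) \<Rightarrow> ('x \<Rightarrow> 'v::euclidean_space) \<Rightarrow> nat \<Rightarrow> nat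
    \<Rightarrow> (nat \<Rightarrow> 'x) \<Rightarrow> (nat \<Rightarrow> nat) \<Rightarrow> nat \<Rightarrow> real" where
  "U_perm_avg phi f N k X Y r = (1 / fact N) * (\<Sum>\<pi>\<in>{\<pi>. \<pi> permutes {0..<N}}.
      avg_loss phi f X (Omega_r_pi N k Y \<pi> r))"

end

theory Submission
  imports Defs
begin

text \<open>
  The difference \<open>U_Omega - U_bar\<close> splits into \<open>\<Sum>r. rho_hat r * (U(\<Omega>_r) - avg\<^sub>\<pi> U(\<Omega>_r^\<pi>))\<close>,
  which is the sum on the right, and the average over \<open>\<pi>\<close> of \<open>\<Sum>r. (rho_hat r - \<omega>_r^\<pi>) * U(\<Omega>_r^\<pi>)\<close>.
  Fix \<open>\<pi>\<close>, let \<open>I = I_\<pi>\<close> be its first block of size \<open>n\<close> and \<open>n_r\<close> the class sizes in \<open>I\<close>.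
  The weights \<open>\<omega>_r^\<pi> = \<lfloor>n_r/2\<rfloor> / \<Sum>q. \<lfloor>n_q/2\<rfloor>\<close> differ from the frequencies \<open>n_r/n\<close> only
  through the (at most \<open>R\<close>) classes of odd size, and \<open>\<Sum>r. (n_r/n - rho_hat r) * U(\<Omega>_r^\<pi>)\<close> is
  the covariance \<open>\<Sum>x\<in>I. \<Sum>y\<notin>I. (U_(Y x) - U_(Y y)) / (n N)\<close> between the blocks.
  Averaged over all permutations, exchanging \<open>x\<close> and \<open>y\<close> between the blocks turns this
  covariance into the effect on \<open>U_(Y x)\<close> of removing the anchor \<open>x\<close> and of swapping the
  negative \<open>y\<close> for \<open>x\<close>. Removing one anchor leaves the average unchanged on average unless
  the class has exactly two elements, and a swap only affects the tuples that use \<open>y\<close>, which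
  costs at most \<open>B k\<close> per anchor. Since \<open>(k + 2) n \<le> 2 N\<close>, all three contributions fit into
  \<open>2 B R / (n - R)\<close>.
\<close>

section \<open>Contrastive tuples\<close>

definition contrastive_tuples :: "nat \<Rightarrow> nat set \<Rightarrow> nat set \<Rightarrow> (nat \<times> nat \<times> nat list) set" where
  "contrastive_tuples k P Q =
     {(a, b, c). a \<in> P \<and> b \<in> P \<and> length c = k \<and> set c \<subseteq> Q \<and> distinct (a # b # c)}"

definition tuple_loss :: "(real list \<Rightarrow> real) \<Rightarrow> ('x \<Rightarrow> 'v::euclidean_space) \<Rightarrow> (nat \<Rightarrow> 'x)
    \<Rightarrow> nat \<times> nat \<times> nat list \<Rightarrow> real" where
  "tuple_loss phi f X = (\<lambda>(a, b, c). loss phi f (X a) (X b) (map X c))"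

lemma avg_loss_eq_sum_div_card: "avg_loss phi f X S = sum (tuple_loss phi f X) S / card S"
  unfolding avg_loss_def tuple_loss_def by (simp add: case_prod_beta')

lemma finite_contrastive_tuples:
  assumes "finite P" "finite Q"
  shows "finite (contrastive_tuples k P Q)"
proof (rule finite_subset)
  show "contrastive_tuples k P Q \<subseteq> P \<times> P \<times> {c. set c \<subseteq> Q \<and> length c = k}"
    unfolding contrastive_tuples_def by auto
  show "finite (P \<times> P \<times> {c. set c \<subseteq> Q \<and> length c = k})"
    using assms by (simp add: finite_lists_length_eq)
qed

lemma card_contrastive_tuples:
  assumes "finite P" "P \<inter> Q = {}"
  shows "card (contrastive_tuples k P Q)
    = card P * (card P - 1) * card {c. length c = k \<and> distinct c \<and> set c \<subseteq> Q}"
proof -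
  define pairs where "pairs = P \<times> P - (\<lambda>a. (a, a)) ` P"
  have card_pairs: "card pairs = card P * (card P - 1)"
    unfolding pairs_def using assms(1)
    by (subst card_Diff_subset) (auto simp: card_image inj_on_def card_cartesian_product diff_mult_distrib2)
  have "contrastive_tuples k P Q
      = (\<lambda>((a, b), c). (a, b, c)) ` (pairs \<times> {c. length c = k \<and> distinct c \<and> set c \<subseteq> Q})"
    unfolding contrastive_tuples_def pairs_def using assms(2)
    by (auto intro: rev_image_eqI[where x = "((_, _), _)"])
  moreover have "inj_on (\<lambda>((a, b), c). (a, b, c)) (pairs \<times> {c. length c = k \<and> distinct c \<and> set c \<subseteq> Q})"
    by (auto intro!: inj_onI)
  ultimately show ?thesis
    by (simp add: card_image card_cartesian_product card_pairs)
qed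

lemma contrastive_tuples_remove_anchor:
  "contrastive_tuples k (P - {x}) Q
    = {t \<in> contrastive_tuples k P Q. fst t \<noteq> x \<and> fst (snd t) \<noteq> x}"
  unfolding contrastive_tuples_def by auto

lemma sum_contrastive_tuples_remove_anchor:
  fixes g :: "nat \<times> nat \<times> nat list \<Rightarrow> real"
  assumes "finite P" "finite Q"
  shows "(\<Sum>x\<in>P. sum g (contrastive_tuples k (P - {x}) Q))
    = real (card P - 2) * sum g (contrastive_tuples k P Q)"
proof -
  let ?T = "contrastive_tuples k P Q"
  have avoiders: "card {x \<in> P. fst t \<noteq> x \<and> fst (snd t) \<noteq> x} = card P - 2" if t: "t \<in> ?T" for t
  proof -
    obtain a b c where "t = (a, b, c)" "a \<in> P" "b \<in> P" "a \<noteq> b"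
      using t unfolding contrastive_tuples_def by auto
    moreover have "{x \<in> P. a \<noteq> x \<and> b \<noteq> x} = P - {a, b}" by auto
    ultimately show ?thesis using assms(1) by (simp add: card_Diff_subset)
  qed
  have "(\<Sum>x\<in>P. sum g (contrastive_tuples k (P - {x}) Q))
      = (\<Sum>x\<in>P. \<Sum>t\<in>?T. if fst t \<noteq> x \<and> fst (snd t) \<noteq> x then g t else 0)"
    using finite_contrastive_tuples[OF assms]
    by (simp add: contrastive_tuples_remove_anchor sum.inter_filter)
  also have "\<dots> = (\<Sum>t\<in>?T. \<Sum>x\<in>P. if fst t \<noteq> x \<and> fst (snd t) \<noteq> x then g t else 0)"
    by (rule sum.swap)
  also have "\<dots> = (\<Sum>t\<in>?T. real (card P - 2) * g t)"
    using assms(1) by (intro sum.cong refl) (simp add: sum.inter_filter[symmetric] avoiders)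
  finally show ?thesis by (simp add: sum_distrib_left)
qed

text \<open>For a class of size at least 3, leaving out one anchor does not change the average loss on
  average; for a class of size 2 it empties the tuple set.\<close>

lemma sum_avg_loss_leave_one_out:
  assumes "finite P" "finite Q" "P \<inter> Q = {}"
  shows "(\<Sum>x\<in>P. avg_loss phi f X (contrastive_tuples k P Q)
                   - avg_loss phi f X (contrastive_tuples k (P - {x}) Q))
    = (if card P = 2 then 2 * avg_loss phi f X (contrastive_tuples k P Q) else 0)"
proof -
  define m where "m = card P"
  define L where "L = real (card {c. length c = k \<and> distinct c \<and> set c \<subseteq> Q})"
  define S where "S = sum (tuple_loss phi f X) (contrastive_tuples k P Q)"
  have avg_P: "avg_loss phi f X (contrastive_tuples k P Q) = S / (real m * real (m - 1) * L)"
    using assms by (simp add: avg_loss_eq_sum_div_card card_contrastive_tuples S_def L_def m_def)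
  have "avg_loss phi f X (contrastive_tuples k (P - {x}) Q)
      = sum (tuple_loss phi f X) (contrastive_tuples k (P - {x}) Q) / (real (m - 1) * real (m - 2) * L)"
    if "x \<in> P" for x
  proof -
    have "card (P - {x}) = m - 1" "m - 1 - 1 = m - 2"
      using that assms(1) by (simp_all add: m_def)
    then show ?thesis
      using assms by (simp add: avg_loss_eq_sum_div_card card_contrastive_tuples L_def Diff_Int_distrib2)
  qed
  then have "(\<Sum>x\<in>P. avg_loss phi f X (contrastive_tuples k (P - {x}) Q))
      = (\<Sum>x\<in>P. sum (tuple_loss phi f X) (contrastive_tuples k (P - {x}) Q))
          / (real (m - 1) * real (m - 2) * L)"
    by (simp add: sum_divide_distrib)
  also have "\<dots> = real (m - 2) * S / (real (m - 1) * real (m - 2) * L)"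
    using assms(1,2) by (simp add: sum_contrastive_tuples_remove_anchor S_def m_def)
  finally have avg_removed: "(\<Sum>x\<in>P. avg_loss phi f X (contrastive_tuples k (P - {x}) Q))
      = real (m - 2) * S / (real (m - 1) * real (m - 2) * L)" .
  consider "m = 2" | "m \<le> 1" | "m \<ge> 3" by linarith
  then show ?thesis
  proof cases
    case 1
    then show ?thesis using avg_removed by (simp add: sum_subtractf m_def)
  next
    case 2
    then show ?thesis using avg_P avg_removed by (simp add: sum_subtractf sum_negf m_def)
  next
    case 3
    then have "real (m - 2) * S / (real (m - 1) * real (m - 2) * L) = real m * (S / (real m * real (m - 1) * L))"
      by (simp add: of_nat_diff)
    then show ?thesis using 3 avg_P avg_removed by (simp add: sum_subtractf m_def)
  qed
qed

lemma Omega_r_eq_contrastive_tuples: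
  "Omega_r N k Y r = contrastive_tuples k {j. j < N \<and> Y j = r} {0..<N}"
  unfolding Omega_r_def contrastive_tuples_def by auto

lemma Omega_r_pi_eq_contrastive_tuples:
  "Omega_r_pi N k Y \<pi> r = contrastive_tuples k {z \<in> I_pi N k \<pi>. Y z = r} ({0..<N} - I_pi N k \<pi>)"
  unfolding Omega_r_pi_def contrastive_tuples_def by auto

lemma avg_loss_bounded:
  assumes "\<And>t. t \<in> S \<Longrightarrow> 0 \<le> tuple_loss phi f X t \<and> tuple_loss phi f X t \<le> B" "0 \<le> B"
  shows "0 \<le> avg_loss phi f X S \<and> avg_loss phi f X S \<le> B"
proof (cases "finite S \<and> S \<noteq> {}")
  case True
  have "sum (tuple_loss phi f X) S \<le> real (card S) * B"
    using sum_bounded_above[of S "tuple_loss phi f X" B] assms(1) by auto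
  moreover have "0 \<le> sum (tuple_loss phi f X) S"
    using assms(1) by (auto intro: sum_nonneg)
  ultimately show ?thesis
    using True by (auto simp: avg_loss_eq_sum_div_card field_simps card_gt_0_iff)
next
  case False
  then show ?thesis using assms(2) by (auto simp: avg_loss_eq_sum_div_card)
qed

lemma swap_negative_mem_contrastive_tuples:
  assumes t: "t \<in> contrastive_tuples k P Q"
    and "y \<in> Q" "x \<notin> Q" "x \<notin> P" "y \<notin> P"
  shows "apsnd (apsnd (map (Transposition.transpose y x))) t \<in> contrastive_tuples k P (insert x (Q - {y}))"
proof -
  obtain a b c where abc: "t = (a, b, c)" "a \<in> P" "b \<in> P" "length c = k" "set c \<subseteq> Q"
      "distinct (a # b # c)"
    using t unfolding contrastive_tuples_def by auto
  have "map (Transposition.transpose y x) (a # b # c) = a # b # map (Transposition.transpose y x) c"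
    using abc(2,3) assms(4,5) by (auto intro: transpose_apply_other)
  moreover have "distinct (map (Transposition.transpose y x) (a # b # c))"
    using abc(6) by (simp only: distinct_map inj_on_transpose)
  moreover have "Transposition.transpose y x ` set c \<subseteq> insert x (Q - {y})"
    using abc(5) assms(3) by (auto simp: Transposition.transpose_def)
  ultimately show ?thesis
    using abc(1-4) unfolding contrastive_tuples_def by simp
qed

lemma bij_betw_swap_negative:
  assumes "y \<in> Q" "x \<notin> Q" "x \<notin> P" "y \<notin> P"
  shows "bij_betw (apsnd (apsnd (map (Transposition.transpose y x))))
    (contrastive_tuples k P Q) (contrastive_tuples k P (insert x (Q - {y})))"
proof (rule bij_betw_byWitness)
  let ?swap = "apsnd (apsnd (map (Transposition.transpose y x)))"
  have involution: "?swap (?swap t) = t" for t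
    by (simp add: apsnd_def map_prod_def split_beta map_idI)
  then show "\<forall>t\<in>contrastive_tuples k P Q. ?swap (?swap t) = t"
    and "\<forall>t\<in>contrastive_tuples k P (insert x (Q - {y})). ?swap (?swap t) = t"
    by blast+
  show "?swap ` contrastive_tuples k P Q \<subseteq> contrastive_tuples k P (insert x (Q - {y}))"
    using swap_negative_mem_contrastive_tuples[OF _ assms] by blast
  have "?swap t \<in> contrastive_tuples k P Q" if t: "t \<in> contrastive_tuples k P (insert x (Q - {y}))" for t
  proof -
    have "insert y (insert x (Q - {y}) - {x}) = Q"
      using assms(1,2) by blast
    then show ?thesis
      using swap_negative_mem_contrastive_tuples[OF t, of x y] assms by (auto simp: transpose_commute)
  qed
  then show "?swap ` contrastive_tuples k P (insert x (Q - {y})) \<subseteq> contrastive_tuples k P Q"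
    by blast
qed

section \<open>Class frequencies and halved weights\<close>

lemma sum_mod_2_eq_card_odd:
  fixes m :: "'a \<Rightarrow> nat"
  assumes "finite A"
  shows "(\<Sum>r\<in>A. m r mod 2) = card {r \<in> A. odd (m r)}"
proof -
  have "(\<Sum>r\<in>A. m r mod 2) = (\<Sum>r\<in>A. if odd (m r) then 1 else 0)"
    by (intro sum.cong refl) (simp add: mod2_eq_if)
  then show ?thesis
    using assms by (simp add: sum.If_cases Collect_conj_eq Int_commute)
qed

lemma abs_sum_mult_le_if_sum_eq_0:
  fixes a U :: "'a \<Rightarrow> real"
  assumes "sum a A = 0" and U: "\<And>r. r \<in> A \<Longrightarrow> 0 \<le> U r \<and> U r \<le> B"
  shows "\<bar>\<Sum>r\<in>A. a r * U r\<bar> \<le> B / 2 * (\<Sum>r\<in>A. \<bar>a r\<bar>)"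
proof -
  have "(\<Sum>r\<in>A. a r * (U r - B / 2)) = (\<Sum>r\<in>A. a r * U r) - sum a A * (B / 2)"
    by (simp add: right_diff_distrib sum_subtractf sum_distrib_right)
  then have "(\<Sum>r\<in>A. a r * U r) = (\<Sum>r\<in>A. a r * (U r - B / 2))"
    using assms(1) by simp
  also have "\<bar>\<dots>\<bar> \<le> (\<Sum>r\<in>A. \<bar>a r\<bar> * (B / 2))"
  proof (rule order_trans[OF sum_abs sum_mono])
    fix r assume "r \<in> A"
    then have "0 \<le> U r" "U r \<le> B" using U by auto
    then have "\<bar>U r - B / 2\<bar> \<le> B / 2" unfolding abs_le_iff by linarith
    then show "\<bar>a r * (U r - B / 2)\<bar> \<le> \<bar>a r\<bar> * (B / 2)"
      unfolding abs_mult by (rule mult_left_mono) simp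
  qed
  finally show ?thesis by (simp add: sum_distrib_left mult.commute)
qed

lemma frequency_minus_halved_weight_eq:
  fixes m :: "'a \<Rightarrow> nat"
  assumes "finite A" and n: "n = (\<Sum>r\<in>A. m r)" and Od: "Od = card {r \<in> A. odd (m r)}" and "Od < n"
  shows "real (m r) / real n - real (m r div 2) / real (\<Sum>q\<in>A. m q div 2)
    = (real n * real (m r mod 2) - real Od * real (m r)) / (real n * (real n - real Od))"
proof -
  have "n = 2 * (\<Sum>q\<in>A. m q div 2) + (\<Sum>q\<in>A. m q mod 2)"
    unfolding n by (simp add: sum_distrib_left flip: sum.distrib)
  then have "n = 2 * (\<Sum>q\<in>A. m q div 2) + Od"
    using Od sum_mod_2_eq_card_odd[OF assms(1), of m] by simp
  then have half: "real (\<Sum>q\<in>A. m q div 2) = (real n - real Od) / 2"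
    by simp
  have "real (m r) = real (2 * (m r div 2) + m r mod 2)"
    by simp
  also have "\<dots> = 2 * real (m r div 2) + real (m r mod 2)"
    by (simp only: of_nat_add of_nat_mult of_nat_numeral)
  finally have div2: "real (m r div 2) = (real (m r) - real (m r mod 2)) / 2"
    by simp
  show ?thesis
    using assms(4) unfolding half div2 by (simp add: field_simps)
qed

lemma abs_sum_frequency_minus_halved_weight_le:
  fixes m :: "'a \<Rightarrow> nat" and U :: "'a \<Rightarrow> real"
  assumes "finite A" and n: "n = (\<Sum>r\<in>A. m r)" and Od: "Od = card {r \<in> A. odd (m r)}"
    and "Od < n" and U: "\<And>r. r \<in> A \<Longrightarrow> 0 \<le> U r \<and> U r \<le> B"
  shows "\<bar>\<Sum>r\<in>A. (real (m r) / real n - real (m r div 2) / real (\<Sum>q\<in>A. m q div 2)) * U r\<bar>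
    \<le> B * real Od / (real n - real Od)"
proof -
  define a where "a r = real (m r) / real n - real (m r div 2) / real (\<Sum>q\<in>A. m q div 2)" for r
  have a_eq: "a r = (real n * real (m r mod 2) - real Od * real (m r)) / (real n * (real n - real Od))" for r
    unfolding a_def using frequency_minus_halved_weight_eq[OF assms(1-4)] .
  have parity: "real Od = (\<Sum>r\<in>A. real (m r mod 2))"
    using sum_mod_2_eq_card_odd[OF assms(1)] Od by (metis of_nat_sum)
  have gap: "0 < real n - real Od" "0 < real n" using assms(4) by simp_all
  have sum_a: "sum a A = 0"
    unfolding a_eq sum_divide_distrib[symmetric]
    by (simp add: sum_subtractf sum_distrib_left[symmetric] parity n)
  have "\<bar>a r\<bar> \<le> (real n * real (m r mod 2) + real Od * real (m r)) / (real n * (real n - real Od))" for r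
  proof -
    have "\<bar>real n * real (m r mod 2) - real Od * real (m r)\<bar> \<le> real n * real (m r mod 2) + real Od * real (m r)"
      by (simp add: abs_le_iff)
    then show ?thesis
      using gap by (simp add: a_eq abs_divide divide_right_mono)
  qed
  then have "(\<Sum>r\<in>A. \<bar>a r\<bar>)
      \<le> (\<Sum>r\<in>A. (real n * real (m r mod 2) + real Od * real (m r)) / (real n * (real n - real Od)))"
    by (rule sum_mono)
  also have "\<dots> = 2 * real Od / (real n - real Od)"
    using gap by (simp add: sum_divide_distrib[symmetric] sum.distrib sum_distrib_left[symmetric] parity n)
  finally have sum_abs_a: "(\<Sum>r\<in>A. \<bar>a r\<bar>) \<le> 2 * real Od / (real n - real Od)" .
  have "A \<noteq> {}" using gap(2) n by auto
  then have "0 \<le> B" using U by force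
  have "\<bar>\<Sum>r\<in>A. a r * U r\<bar> \<le> B / 2 * (\<Sum>r\<in>A. \<bar>a r\<bar>)"
    by (rule abs_sum_mult_le_if_sum_eq_0[OF sum_a U])
  also have "\<dots> \<le> B / 2 * (2 * real Od / (real n - real Od))"
    using sum_abs_a \<open>0 \<le> B\<close> by (intro mult_left_mono) simp_all
  finally show ?thesis unfolding a_def by simp
qed

lemma sum_by_label:
  fixes G :: "nat \<Rightarrow> 'a::comm_semiring_1"
  assumes "finite I" "Y ` I \<subseteq> {1..R}"
  shows "(\<Sum>x\<in>I. G (Y x)) = (\<Sum>r=1..R. of_nat (card {z \<in> I. Y z = r}) * G r)"
proof -
  have "(\<Sum>x\<in>I. G (Y x)) = (\<Sum>r=1..R. \<Sum>x\<in>{z \<in> I. Y z = r}. G (Y x))"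
    using sum.group[OF assms(1) _ assms(2), of "\<lambda>x. G (Y x)"] by simp
  also have "\<dots> = (\<Sum>r=1..R. of_nat (card {z \<in> I. Y z = r}) * G r)"
    by (intro sum.cong refl) simp
  finally show ?thesis .
qed

lemma sum_card_label_classes:
  fixes Y :: "'a \<Rightarrow> nat"
  assumes "finite I" "Y ` I \<subseteq> {1..R}"
  shows "(\<Sum>r=1..R. card {z \<in> I. Y z = r}) = card I"
  using sum_by_label[OF assms, of "\<lambda>_. 1 :: nat"] by simp

lemma card_odd_add_card_eq_2_le:
  fixes m :: "'a \<Rightarrow> nat"
  assumes "finite A"
  shows "card {r \<in> A. odd (m r)} + card {r \<in> A. m r = 2} \<le> card A"
proof -
  have "card {r \<in> A. odd (m r)} + card {r \<in> A. m r = 2} = card ({r \<in> A. odd (m r)} \<union> {r \<in> A. m r = 2})"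
    using assms by (subst card_Un_disjoint) auto
  also have "\<dots> \<le> card A"
    using assms by (intro card_mono) auto
  finally show ?thesis .
qed

lemma even_card_odd_if_even_sum:
  fixes m :: "'a \<Rightarrow> nat"
  assumes "finite A" "even (\<Sum>r\<in>A. m r)"
  shows "even (card {r \<in> A. odd (m r)})"
proof -
  have "(\<Sum>r\<in>A. m r) = 2 * (\<Sum>r\<in>A. m r div 2) + (\<Sum>r\<in>A. m r mod 2)"
    by (simp add: sum_distrib_left flip: sum.distrib)
  then show ?thesis
    using assms by (simp add: sum_mod_2_eq_card_odd)
qed

lemma sum_eq_if_all_eq_2:
  fixes m :: "'a \<Rightarrow> nat"
  assumes "finite A" "card {r \<in> A. m r = 2} = card A"
  shows "(\<Sum>r\<in>A. m r) = 2 * card A"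
proof -
  have "{r \<in> A. m r = 2} = A"
    using assms by (intro card_subset_eq) auto
  then have "(\<Sum>r\<in>A. m r) = (\<Sum>r\<in>A. 2)"
    by (intro sum.cong refl) blast
  then show ?thesis by simp
qed

section \<open>Exchange symmetry of random splits\<close>

lemma permutes_image_atLeastLessThan_complement:
  fixes \<pi> :: "nat \<Rightarrow> nat"
  assumes "\<pi> permutes {0..<N}" "n \<le> N"
  shows "{0..<N} - \<pi> ` {0..<n} = \<pi> ` {n..<N}"
proof -
  have "\<pi> ` {0..<n} \<union> \<pi> ` {n..<N} = {0..<N}"
    using permutes_image[OF assms(1)] assms(2) by (metis image_Un ivl_disj_un_two(3) zero_le)
  moreover have "\<pi> ` {0..<n} \<inter> \<pi> ` {n..<N} = {}"
    using permutes_inj[OF assms(1)] by (auto simp: inj_eq)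
  ultimately show ?thesis by blast
qed

lemma sum_prefix_suffix_permutes:
  fixes \<pi> :: "nat \<Rightarrow> nat"
  assumes "\<pi> permutes {0..<N}" "n \<le> N"
  shows "(\<Sum>x\<in>\<pi> ` {0..<n}. \<Sum>y\<in>{0..<N} - \<pi> ` {0..<n}. G x y)
    = (\<Sum>i\<in>{0..<n}. \<Sum>j\<in>{n..<N}. G (\<pi> i) (\<pi> j))"
  using permutes_inj[OF assms(1)]
  by (simp add: permutes_image_atLeastLessThan_complement[OF assms] sum.reindex inj_on_subset)

lemma image_compose_transpose_prefix:
  fixes \<pi> :: "nat \<Rightarrow> 'a" and i j n :: nat
  assumes "inj \<pi>" "i < n" "n \<le> j"
  shows "(\<pi> \<circ> Transposition.transpose i j) ` {0..<n} = insert (\<pi> j) (\<pi> ` {0..<n} - {\<pi> i})"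
proof -
  have "Transposition.transpose i j ` {0..<n} = insert j ({0..<n} - {i})"
    using assms(2,3) by (auto simp: in_transpose_image_iff Transposition.transpose_def)
  then have "(\<pi> \<circ> Transposition.transpose i j) ` {0..<n} = \<pi> ` insert j ({0..<n} - {i})"
    by (metis image_comp)
  then show ?thesis
    using assms(1) by (simp add: image_set_diff)
qed

text \<open>Composing with the transposition of two positions \<open>i < n \<le> j\<close> is a bijection of the
  permutations that moves \<open>\<pi> i\<close> and \<open>\<pi> j\<close> across the blocks.\<close>

lemma sum_permutations_exchange:
  fixes H :: "nat set \<Rightarrow> nat \<Rightarrow> nat \<Rightarrow> 'a::comm_monoid_add"
  assumes "n \<le> N"
  shows "(\<Sum>\<pi>\<in>{\<pi>. \<pi> permutes {0..<N}}. \<Sum>x\<in>\<pi> ` {0..<n}. \<Sum>y\<in>{0..<N} - \<pi> ` {0..<n}.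
            H (\<pi> ` {0..<n}) x y)
    = (\<Sum>\<pi>\<in>{\<pi>. \<pi> permutes {0..<N}}. \<Sum>x\<in>\<pi> ` {0..<n}. \<Sum>y\<in>{0..<N} - \<pi> ` {0..<n}.
            H (insert y (\<pi> ` {0..<n} - {x})) y x)"
proof -
  let ?Perms = "{\<pi>. \<pi> permutes {0..<N}}"
  have exchange: "(\<Sum>\<pi>\<in>?Perms. H (\<pi> ` {0..<n}) (\<pi> i) (\<pi> j))
      = (\<Sum>\<pi>\<in>?Perms. H (insert (\<pi> j) (\<pi> ` {0..<n} - {\<pi> i})) (\<pi> j) (\<pi> i))"
    if "i \<in> {0..<n}" "j \<in> {n..<N}" for i j
  proof -
    have "Transposition.transpose i j permutes {0..<N}"
      using that assms by (intro permutes_swap_id) auto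
    then show ?thesis
      using that by (subst sum_permutations_compose_right) (auto intro!: sum.cong
          simp: image_compose_transpose_prefix[unfolded comp_def] permutes_inj)
  qed
  have "(\<Sum>\<pi>\<in>?Perms. \<Sum>x\<in>\<pi> ` {0..<n}. \<Sum>y\<in>{0..<N} - \<pi> ` {0..<n}. H (\<pi> ` {0..<n}) x y)
      = (\<Sum>\<pi>\<in>?Perms. \<Sum>i\<in>{0..<n}. \<Sum>j\<in>{n..<N}. H (\<pi> ` {0..<n}) (\<pi> i) (\<pi> j))"
    using assms by (intro sum.cong refl sum_prefix_suffix_permutes) auto
  also have "\<dots> = (\<Sum>i\<in>{0..<n}. \<Sum>j\<in>{n..<N}. \<Sum>\<pi>\<in>?Perms. H (\<pi> ` {0..<n}) (\<pi> i) (\<pi> j))"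
    by (subst sum.swap) (simp add: sum.swap[of _ ?Perms])
  also have "\<dots> = (\<Sum>i\<in>{0..<n}. \<Sum>j\<in>{n..<N}. \<Sum>\<pi>\<in>?Perms.
      H (insert (\<pi> j) (\<pi> ` {0..<n} - {\<pi> i})) (\<pi> j) (\<pi> i))"
    by (rule sum.cong[OF refl], rule sum.cong[OF refl], rule exchange)
  also have "\<dots> = (\<Sum>\<pi>\<in>?Perms. \<Sum>i\<in>{0..<n}. \<Sum>j\<in>{n..<N}.
      H (insert (\<pi> j) (\<pi> ` {0..<n} - {\<pi> i})) (\<pi> j) (\<pi> i))"
    by (subst sum.swap) (simp add: sum.swap[of _ ?Perms])
  also have "\<dots> = (\<Sum>\<pi>\<in>?Perms. \<Sum>x\<in>\<pi> ` {0..<n}. \<Sum>y\<in>{0..<N} - \<pi> ` {0..<n}.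
      H (insert y (\<pi> ` {0..<n} - {x})) y x)"
    using assms by (intro sum.cong refl sum_prefix_suffix_permutes[symmetric]) auto
  finally show ?thesis .
qed

lemma permutes_image_prefix:
  fixes \<pi> :: "nat \<Rightarrow> nat"
  assumes "\<pi> permutes {0..<N}" "n \<le> N"
  shows "\<pi> ` {0..<n} \<subseteq> {0..<N}" "card (\<pi> ` {0..<n}) = n"
  using permutes_image[OF assms(1)] assms(2) permutes_inj[OF assms(1)]
  by (auto simp: card_image inj_on_subset)

section \<open>The constant \<open>2 B R / (n - R)\<close>\<close>

lemma mult_n_aux_le: "(k + 2) * n_aux N k \<le> 2 * N"
  unfolding n_aux_def using times_div_less_eq_dividend[of "k + 2" N] by (simp add: algebra_simps)

lemma n_aux_le: "n_aux N k \<le> N"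
proof -
  have "2 * n_aux N k \<le> (k + 2) * n_aux N k"
    by (intro mult_right_mono) auto
  then show ?thesis using mult_n_aux_le[of k N] by linarith
qed

lemma even_n_aux: "even (n_aux N k)"
  unfolding n_aux_def by simp

text \<open>\<open>Od\<close> and \<open>Tw\<close> count the classes of odd size and of size 2 in a first block of even size \<open>n\<close>;
  the two terms on the left bound the weight mismatch and the scaled exchange defect.\<close>

lemma weight_defect_arith:
  fixes B :: real and R n Od Tw :: nat
  assumes "0 \<le> B" "R < n" "Od + Tw \<le> R" "even Od" "Tw = R \<Longrightarrow> n = 2 * R"
  shows "B * real Od / (real n - real Od) + 2 * B * (real Tw + 1) / real n \<le> 2 * B * real R / (real n - real R)"
proof -
  have gap: "0 < real n - real R" "0 < real n" using assms(2) by simp_all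
  have od: "B * real Od / (real n - real Od) \<le> B * real Od / (real n - real R)"
    using assms(1,3) gap by (intro divide_left_mono mult_nonneg_nonneg) simp_all
  have n: "2 * B * (real Tw + 1) / real n \<le> 2 * B * (real Tw + 1) / (real n - real R)"
    using assms(1) gap by (intro divide_left_mono) simp_all
  have "Od \<noteq> 1" using assms(4) by auto
  then have "Tw + 2 \<le> R \<or> (Tw + 1 = R \<and> Od = 0) \<or> (Tw = R \<and> Od = 0 \<and> n = 2 * R)"
    using assms(3,5) by (cases "Tw = R") arith+
  then consider "Tw + 2 \<le> R" | "Tw + 1 = R" "Od = 0" | "Tw = R" "Od = 0" "n = 2 * R"
    by blast
  then show ?thesis
  proof cases
    case 1
    then have "real (Od + 2 * (Tw + 1)) \<le> real (2 * R)"
      using assms(3) unfolding of_nat_le_iff by presburger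
    then have "B * (real Od + 2 * (real Tw + 1)) \<le> B * (2 * real R)"
      using assms(1) by (intro mult_left_mono) simp_all
    then have "B * real Od + 2 * B * (real Tw + 1) \<le> 2 * B * real R"
      by (simp add: algebra_simps)
    then have "B * real Od / (real n - real R) + 2 * B * (real Tw + 1) / (real n - real R)
        \<le> 2 * B * real R / (real n - real R)"
      unfolding add_divide_distrib[symmetric] using gap(1) by (intro divide_right_mono) simp_all
    then show ?thesis
      using od n by linarith
  next
    case 2
    then have R: "real Tw + 1 = real R" by simp
    show ?thesis
      using n 2(2) unfolding R by simp
  next
    case 3
    then have "1 \<le> real R" using assms(2) by simp
    then have "B \<le> B * real R" using assms(1) by (metis mult_left_mono mult.right_neutral)
    then show ?thesis using 3 assms(2) by (simp add: field_simps)
  qed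
qed

lemma scaled_defect_le:
  fixes B D :: real and n N k Tw :: nat
  assumes "0 \<le> B" "0 < n" "n \<le> N" "(k + 2) * n \<le> 2 * N"
    and "\<bar>D\<bar> \<le> 2 * B * real Tw * (real N - real n) + real n * B * real k"
  shows "\<bar>D\<bar> / (real n * real N) \<le> 2 * B * (real Tw + 1) / real n"
proof -
  have "n * k \<le> 2 * N"
    using assms(4) by (simp add: algebra_simps)
  then have "real (n * k) \<le> real (2 * N)"
    by (simp only: of_nat_le_iff)
  then have "real n * real k \<le> 2 * real N"
    by simp
  then have "B * (real n * real k) \<le> B * (2 * real N)"
    using assms(1) by (rule mult_left_mono)
  moreover have "2 * B * real Tw * (real N - real n) \<le> 2 * B * real Tw * real N"
    using assms(1) by (intro mult_left_mono) simp_all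
  ultimately have "\<bar>D\<bar> \<le> 2 * B * (real Tw + 1) * real N"
    using assms(5) by (simp add: algebra_simps)
  then show ?thesis
    using assms(2,3) by (simp add: field_simps)
qed

locale bounded_contrastive_loss =
  fixes phi :: "real list \<Rightarrow> real" and f :: "'x \<Rightarrow> 'v::euclidean_space" and k :: nat and B :: real
  assumes loss_bounded: "length xs = k \<Longrightarrow> 0 \<le> loss phi f x xp xs \<and> loss phi f x xp xs \<le> B"
begin

lemma bound_nonneg: "0 \<le> B"
  using loss_bounded[of "replicate k undefined"] by fastforce

lemma tuple_loss_bounded:
  "t \<in> contrastive_tuples k P Q \<Longrightarrow> 0 \<le> tuple_loss phi f X t \<and> tuple_loss phi f X t \<le> B"
  unfolding contrastive_tuples_def tuple_loss_def using loss_bounded by auto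

lemma avg_loss_contrastive_tuples_bounded:
  "0 \<le> avg_loss phi f X (contrastive_tuples k P Q) \<and> avg_loss phi f X (contrastive_tuples k P Q) \<le> B"
  using avg_loss_bounded tuple_loss_bounded bound_nonneg by blast

lemma abs_avg_loss_swap_negative_le:
  assumes "y \<in> Q" "x \<notin> Q" "x \<notin> P" "y \<notin> P"
  shows "\<bar>avg_loss phi f X (contrastive_tuples k P Q)
           - avg_loss phi f X (contrastive_tuples k P (insert x (Q - {y})))\<bar>
    \<le> (\<Sum>t\<in>contrastive_tuples k P Q. if y \<in> set (snd (snd t)) then B else 0)
        / real (card (contrastive_tuples k P Q))"
proof -
  let ?T = "contrastive_tuples k P Q" and ?L = "tuple_loss phi f X"
  let ?swap = "apsnd (apsnd (map (Transposition.transpose y x)))"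
  have bij: "bij_betw ?swap ?T (contrastive_tuples k P (insert x (Q - {y})))"
    using bij_betw_swap_negative[OF assms] .
  have "\<bar>?L t - ?L (?swap t)\<bar> \<le> (if y \<in> set (snd (snd t)) then B else 0)" if t: "t \<in> ?T" for t
  proof (cases "y \<in> set (snd (snd t))")
    case True
    then show ?thesis
      using tuple_loss_bounded[where X = X, OF t] tuple_loss_bounded[where X = X, OF bij_betw_apply[OF bij t]]
      by auto
  next
    case False
    have "set (snd (snd t)) \<subseteq> Q" using t unfolding contrastive_tuples_def by auto
    then have "map (Transposition.transpose y x) (snd (snd t)) = snd (snd t)"
      using False assms(2) by (intro map_idI transpose_apply_other) auto
    then show ?thesis using False bound_nonneg by (simp add: apsnd_def map_prod_def split_beta)
  qed
  then have "\<bar>\<Sum>t\<in>?T. ?L t - ?L (?swap t)\<bar> \<le> (\<Sum>t\<in>?T. if y \<in> set (snd (snd t)) then B else 0)"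
    by (intro order_trans[OF sum_abs sum_mono])
  moreover have "avg_loss phi f X ?T - avg_loss phi f X (contrastive_tuples k P (insert x (Q - {y})))
      = (\<Sum>t\<in>?T. ?L t - ?L (?swap t)) / real (card ?T)"
    by (simp add: avg_loss_eq_sum_div_card sum.reindex_bij_betw[OF bij, symmetric]
        bij_betw_same_card[OF bij, symmetric] sum_subtractf diff_divide_distrib)
  ultimately show ?thesis by (simp add: divide_right_mono)
qed

text \<open>Swapping a negative \<open>y\<close> for the fresh index \<open>x\<close> only changes the tuples that use \<open>y\<close>,
  and each tuple uses exactly \<open>k\<close> negatives.\<close>

lemma sum_abs_avg_loss_swap_negative_le:
  assumes "finite Q" "P \<inter> Q = {}" "x \<notin> P" "x \<notin> Q"
  shows "(\<Sum>y\<in>Q. \<bar>avg_loss phi f X (contrastive_tuples k P Q)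
                   - avg_loss phi f X (contrastive_tuples k P (insert x (Q - {y})))\<bar>) \<le> B * real k"
proof -
  let ?T = "contrastive_tuples k P Q"
  have uses_k: "(\<Sum>y\<in>Q. if y \<in> set (snd (snd t)) then B else 0) = B * real k" if t: "t \<in> ?T" for t
  proof -
    have "set (snd (snd t)) \<subseteq> Q" "card (set (snd (snd t))) = k"
      using t unfolding contrastive_tuples_def by (auto simp: distinct_card)
    then show ?thesis
      using assms(1) by (simp add: sum.If_cases Int_absorb1)
  qed
  have "(\<Sum>y\<in>Q. \<bar>avg_loss phi f X ?T - avg_loss phi f X (contrastive_tuples k P (insert x (Q - {y})))\<bar>)
      \<le> (\<Sum>y\<in>Q. (\<Sum>t\<in>?T. if y \<in> set (snd (snd t)) then B else 0) / real (card ?T))"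
    using assms(2-4) by (intro sum_mono abs_avg_loss_swap_negative_le) auto
  also have "\<dots> = (\<Sum>t\<in>?T. \<Sum>y\<in>Q. if y \<in> set (snd (snd t)) then B else 0) / real (card ?T)"
    by (simp add: sum_divide_distrib[symmetric] sum.swap[of _ Q])
  also have "\<dots> = (\<Sum>t\<in>?T. B * real k) / real (card ?T)"
    by (simp add: uses_k)
  also have "\<dots> \<le> B * real k"
    using bound_nonneg by (cases "card ?T = 0") simp_all
  finally show ?thesis .
qed

lemma abs_sum_leave_one_out_le:
  fixes Y :: "nat \<Rightarrow> nat"
  assumes "finite I" "Y ` I \<subseteq> {1..R}" "finite Q" "I \<inter> Q = {}"
  shows "\<bar>\<Sum>x\<in>I. if Y x \<noteq> c
              then avg_loss phi f X (contrastive_tuples k {z \<in> I. Y z = Y x} Q)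
                 - avg_loss phi f X (contrastive_tuples k ({z \<in> I. Y z = Y x} - {x}) Q)
              else 0\<bar>
    \<le> 2 * B * real (card {r \<in> {1..R}. card {z \<in> I. Y z = r} = 2})"
proof -
  let ?P = "\<lambda>r. {z \<in> I. Y z = r}"
  let ?A = "\<lambda>P. avg_loss phi f X (contrastive_tuples k P Q)"
  have class_sum: "(\<Sum>x\<in>?P r. if Y x \<noteq> c then ?A (?P (Y x)) - ?A (?P (Y x) - {x}) else 0)
      = (if r \<noteq> c \<and> card (?P r) = 2 then 2 * ?A (?P r) else 0)" for r
  proof -
    have "(\<Sum>x\<in>?P r. if Y x \<noteq> c then ?A (?P (Y x)) - ?A (?P (Y x) - {x}) else 0)
        = (if r \<noteq> c then (\<Sum>x\<in>?P r. ?A (?P r) - ?A (?P r - {x})) else 0)"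
      by (auto intro: sum.cong)
    moreover have "?P r \<inter> Q = {}" using assms(4) by blast
    ultimately show ?thesis
      using assms(1,3) sum_avg_loss_leave_one_out[of "?P r" Q phi f X k] by auto
  qed
  have "(\<Sum>x\<in>I. if Y x \<noteq> c then ?A (?P (Y x)) - ?A (?P (Y x) - {x}) else 0)
      = (\<Sum>r=1..R. \<Sum>x\<in>?P r. if Y x \<noteq> c then ?A (?P (Y x)) - ?A (?P (Y x) - {x}) else 0)"
    by (rule sum.group[OF assms(1) _ assms(2), symmetric]) simp
  also have "\<dots> = (\<Sum>r=1..R. if r \<noteq> c \<and> card (?P r) = 2 then 2 * ?A (?P r) else 0)"
    unfolding class_sum ..
  also have "\<bar>\<dots>\<bar> \<le> (\<Sum>r=1..R. if card (?P r) = 2 then 2 * B else 0)"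
    using avg_loss_contrastive_tuples_bounded bound_nonneg
    by (intro order_trans[OF sum_abs sum_mono]) (auto simp: abs_le_iff)
  also have "\<dots> = 2 * B * real (card {r \<in> {1..R}. card (?P r) = 2})"
    using sum.inter_filter[of "{1..R}" "\<lambda>_. 2 * B" "\<lambda>r. card (?P r) = 2"] by (simp add: mult.commute)
  finally show ?thesis .
qed

lemma abs_sum_swap_negative_le:
  fixes Y :: "nat \<Rightarrow> nat"
  assumes "finite I" "finite Q" "I \<inter> Q = {}"
  shows "\<bar>\<Sum>x\<in>I. \<Sum>y\<in>Q. if Y x \<noteq> Y y
              then avg_loss phi f X (contrastive_tuples k ({z \<in> I. Y z = Y x} - {x}) Q)
                 - avg_loss phi f X (contrastive_tuples k ({z \<in> I. Y z = Y x} - {x}) (insert x (Q - {y})))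
              else 0\<bar>
    \<le> real (card I) * B * real k"
proof -
  let ?A = "\<lambda>P Q. avg_loss phi f X (contrastive_tuples k P Q)" and ?P = "\<lambda>x. {z \<in> I. Y z = Y x} - {x}"
  have "\<bar>\<Sum>y\<in>Q. if Y x \<noteq> Y y then ?A (?P x) Q - ?A (?P x) (insert x (Q - {y})) else 0\<bar> \<le> B * real k"
    if "x \<in> I" for x
  proof -
    have "\<bar>\<Sum>y\<in>Q. if Y x \<noteq> Y y then ?A (?P x) Q - ?A (?P x) (insert x (Q - {y})) else 0\<bar>
        \<le> (\<Sum>y\<in>Q. \<bar>?A (?P x) Q - ?A (?P x) (insert x (Q - {y}))\<bar>)"
      by (intro order_trans[OF sum_abs sum_mono]) auto
    also have "\<dots> \<le> B * real k"
      using that assms by (intro sum_abs_avg_loss_swap_negative_le) auto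
    finally show ?thesis .
  qed
  then have "\<bar>\<Sum>x\<in>I. \<Sum>y\<in>Q. if Y x \<noteq> Y y then ?A (?P x) Q - ?A (?P x) (insert x (Q - {y})) else 0\<bar>
      \<le> (\<Sum>x\<in>I. B * real k)"
    by (intro order_trans[OF sum_abs sum_mono])
  then show ?thesis by simp
qed

lemma abs_avg_loss_Omega_r_minus_U_perm_avg_le:
  "\<bar>avg_loss phi f X (Omega_r N k Y r) - U_perm_avg phi f N k X Y r\<bar> \<le> B"
proof -
  let ?Perms = "{\<pi>. \<pi> permutes {0..<N}}"
  have A: "0 \<le> avg_loss phi f X (Omega_r N k Y r)" "avg_loss phi f X (Omega_r N k Y r) \<le> B"
    unfolding Omega_r_eq_contrastive_tuples using avg_loss_contrastive_tuples_bounded by auto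
  have V: "0 \<le> avg_loss phi f X (Omega_r_pi N k Y \<pi> r)" "avg_loss phi f X (Omega_r_pi N k Y \<pi> r) \<le> B" for \<pi>
    unfolding Omega_r_pi_eq_contrastive_tuples using avg_loss_contrastive_tuples_bounded by auto
  have "(\<Sum>\<pi>\<in>?Perms. avg_loss phi f X (Omega_r_pi N k Y \<pi> r)) \<le> fact N * B"
    using sum_bounded_above[of ?Perms _ B] V by (simp add: card_permutations)
  moreover have "0 \<le> (\<Sum>\<pi>\<in>?Perms. avg_loss phi f X (Omega_r_pi N k Y \<pi> r))"
    using V by (simp add: sum_nonneg)
  ultimately have "0 \<le> U_perm_avg phi f N k X Y r" "U_perm_avg phi f N k X Y r \<le> B"
    unfolding U_perm_avg_def by (simp_all add: field_simps)
  then show ?thesis using A by linarith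
qed

end

locale contrastive_sample = bounded_contrastive_loss phi f k B
  for phi :: "real list \<Rightarrow> real" and f :: "'x \<Rightarrow> 'v::euclidean_space" and k :: nat and B :: real +
  fixes X :: "nat \<Rightarrow> 'x" and N R :: nat and Y :: "nat \<Rightarrow> nat"
  assumes labels_in_range: "j < N \<Longrightarrow> Y j \<in> {1..R}"
begin

text \<open>\<open>U_split I r\<close> is \<open>U(\<Omega>_r^\<pi>)\<close> when \<open>I = I_\<pi>\<close>.\<close>

abbreviation U_split :: "nat set \<Rightarrow> nat \<Rightarrow> real" where
  "U_split I r \<equiv> avg_loss phi f X (contrastive_tuples k {z \<in> I. Y z = r} ({0..<N} - I))"

lemma sum_label_frequency_minus_rho_hat:
  fixes G :: "nat \<Rightarrow> real"
  assumes "I \<subseteq> {0..<N}" "0 < card I"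
  shows "(\<Sum>r=1..R. (real (card {z \<in> I. Y z = r}) / real (card I) - rho_hat N Y r) * G r)
    = (\<Sum>x\<in>I. \<Sum>y\<in>{0..<N} - I. G (Y x) - G (Y y)) / (real (card I) * real N)"
proof -
  let ?n = "card I"
  have fin: "finite I" using assms(1) finite_subset by blast
  have "?n \<le> N" using card_mono[OF _ assms(1)] by simp
  then have N: "0 < real N" using assms(2) by simp
  have labels: "Y ` I \<subseteq> {1..R}" "Y ` {0..<N} \<subseteq> {1..R}"
    using assms(1) labels_in_range by auto
  have "(\<Sum>x\<in>I. \<Sum>y\<in>{0..<N} - I. G (Y x) - G (Y y))
      = real (N - ?n) * (\<Sum>x\<in>I. G (Y x)) - real ?n * ((\<Sum>y\<in>{0..<N}. G (Y y)) - (\<Sum>x\<in>I. G (Y x)))"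
    using assms(1) fin by (simp add: sum_subtractf sum_diff card_Diff_subset sum_distrib_left)
  also have "\<dots> = real N * (\<Sum>x\<in>I. G (Y x)) - real ?n * (\<Sum>y\<in>{0..<N}. G (Y y))"
    using \<open>?n \<le> N\<close> by (simp add: of_nat_diff algebra_simps)
  also have "\<dots> = real ?n * real N * (\<Sum>r=1..R. (real (card {z \<in> I. Y z = r}) / real ?n - rho_hat N Y r) * G r)"
    using assms(2) N
    by (simp add: sum_by_label[OF fin labels(1)] sum_by_label[OF _ labels(2)] rho_hat_def
        sum_distrib_left sum_subtractf[symmetric] algebra_simps)
  finally show ?thesis
    using assms(2) N by simp
qed

definition exchange_defect :: "nat set \<Rightarrow> real" where
  "exchange_defect I = (\<Sum>x\<in>I. \<Sum>y\<in>{0..<N} - I.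
     if Y x \<noteq> Y y then U_split I (Y x) - U_split (insert y (I - {x})) (Y x) else 0)"

lemma sum_permutations_label_covariance_eq:
  assumes "n \<le> N"
  shows "(\<Sum>\<pi>\<in>{\<pi>. \<pi> permutes {0..<N}}. \<Sum>x\<in>\<pi> ` {0..<n}. \<Sum>y\<in>{0..<N} - \<pi> ` {0..<n}.
            U_split (\<pi> ` {0..<n}) (Y x) - U_split (\<pi> ` {0..<n}) (Y y))
    = (\<Sum>\<pi>\<in>{\<pi>. \<pi> permutes {0..<N}}. exchange_defect (\<pi> ` {0..<n}))"
proof -
  let ?Perms = "{\<pi>. \<pi> permutes {0..<N}}"
  let ?own = "\<lambda>I x y. if Y x \<noteq> Y y then U_split I (Y x) else 0"
  let ?other = "\<lambda>I x y. if Y x \<noteq> Y y then U_split I (Y y) else 0"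
  have "(\<Sum>\<pi>\<in>?Perms. \<Sum>x\<in>\<pi> ` {0..<n}. \<Sum>y\<in>{0..<N} - \<pi> ` {0..<n}.
            U_split (\<pi> ` {0..<n}) (Y x) - U_split (\<pi> ` {0..<n}) (Y y))
      = (\<Sum>\<pi>\<in>?Perms. \<Sum>x\<in>\<pi> ` {0..<n}. \<Sum>y\<in>{0..<N} - \<pi> ` {0..<n}. ?own (\<pi> ` {0..<n}) x y)
      - (\<Sum>\<pi>\<in>?Perms. \<Sum>x\<in>\<pi> ` {0..<n}. \<Sum>y\<in>{0..<N} - \<pi> ` {0..<n}. ?other (\<pi> ` {0..<n}) x y)"
    unfolding sum_subtractf[symmetric] by (intro sum.cong refl) auto
  also have "\<dots> = (\<Sum>\<pi>\<in>?Perms. \<Sum>x\<in>\<pi> ` {0..<n}. \<Sum>y\<in>{0..<N} - \<pi> ` {0..<n}. ?own (\<pi> ` {0..<n}) x y)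
      - (\<Sum>\<pi>\<in>?Perms. \<Sum>x\<in>\<pi> ` {0..<n}. \<Sum>y\<in>{0..<N} - \<pi> ` {0..<n}.
           ?other (insert y (\<pi> ` {0..<n} - {x})) y x)"
    using sum_permutations_exchange[OF assms, of ?other] by simp
  also have "\<dots> = (\<Sum>\<pi>\<in>?Perms. exchange_defect (\<pi> ` {0..<n}))"
    unfolding exchange_defect_def sum_subtractf[symmetric] by (intro sum.cong refl) auto
  finally show ?thesis .
qed

text \<open>After the exchange, the defect splits into a leave-one-anchor-out part, which only sees the
  classes of size 2, and a swap-one-negative part.\<close>

lemma abs_exchange_defect_le:
  assumes "I \<subseteq> {0..<N}"
  shows "\<bar>exchange_defect I\<bar>
    \<le> 2 * B * real (card {r \<in> {1..R}. card {z \<in> I. Y z = r} = 2}) * (real N - real (card I))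
      + real (card I) * B * real k"
proof -
  let ?J = "{0..<N} - I" and ?P = "\<lambda>x. {z \<in> I. Y z = Y x}"
  let ?A = "\<lambda>P Q. avg_loss phi f X (contrastive_tuples k P Q)"
  define Tw where "Tw = card {r \<in> {1..R}. card {z \<in> I. Y z = r} = 2}"
  define anchor_part where
    "anchor_part = (\<Sum>y\<in>?J. \<Sum>x\<in>I. if Y x \<noteq> Y y then ?A (?P x) ?J - ?A (?P x - {x}) ?J else 0)"
  define negative_part where "negative_part = (\<Sum>x\<in>I. \<Sum>y\<in>?J.
    if Y x \<noteq> Y y then ?A (?P x - {x}) ?J - ?A (?P x - {x}) (insert x (?J - {y})) else 0)"
  have fin: "finite I" using assms finite_subset by blast
  have labels: "Y ` I \<subseteq> {1..R}" using assms labels_in_range by auto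
  have card_J: "real (card ?J) = real N - real (card I)"
    using assms fin card_mono[OF _ assms] by (simp add: card_Diff_subset of_nat_diff)
  have exchanged: "U_split (insert y (I - {x})) (Y x) = ?A (?P x - {x}) (insert x (?J - {y}))"
    if "x \<in> I" "y \<in> ?J" "Y x \<noteq> Y y" for x y
  proof -
    have "{z \<in> insert y (I - {x}). Y z = Y x} = ?P x - {x}"
      using that(3) by auto
    moreover have "{0..<N} - insert y (I - {x}) = insert x (?J - {y})"
      using that(1,2) assms by auto
    ultimately show ?thesis by simp
  qed
  have "exchange_defect I = anchor_part + negative_part"
    unfolding exchange_defect_def anchor_part_def negative_part_def sum.swap[of _ ?J I] sum.distrib[symmetric]
    by (intro sum.cong refl) (use exchanged in auto)
  moreover have "\<bar>anchor_part\<bar> \<le> 2 * B * real Tw * (real N - real (card I))"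
  proof -
    have "\<bar>anchor_part\<bar> \<le> (\<Sum>y\<in>?J. 2 * B * real Tw)"
      unfolding anchor_part_def Tw_def
      using abs_sum_leave_one_out_le[OF fin labels, of ?J] by (intro order_trans[OF sum_abs sum_mono]) auto
    then show ?thesis using card_J by (simp add: mult.commute)
  qed
  moreover have "\<bar>negative_part\<bar> \<le> real (card I) * B * real k"
    unfolding negative_part_def using fin by (intro abs_sum_swap_negative_le) auto
  ultimately show ?thesis
    unfolding Tw_def by linarith
qed

lemma abs_weight_mismatch_minus_defect_le:
  assumes "\<pi> permutes {0..<N}" "R < n_aux N k"
  defines "I \<equiv> I_pi N k \<pi>" and "n \<equiv> n_aux N k"
  shows "\<bar>(\<Sum>r=1..R. (real (card {z \<in> I. Y z = r}) / real n - omega_r_pi N k R Y \<pi> r) * U_split I r)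
      - exchange_defect I / (real n * real N)\<bar> \<le> 2 * B * real R / (real n - real R)"
proof -
  define m where "m r = card {z \<in> I. Y z = r}" for r
  define Od where "Od = card {r \<in> {1..R}. odd (m r)}"
  define Tw where "Tw = card {r \<in> {1..R}. m r = 2}"
  have n: "n \<le> N" "(k + 2) * n \<le> 2 * N" "even n" "R < n"
    using n_aux_le mult_n_aux_le even_n_aux assms(2) unfolding n_def by auto
  have I: "I \<subseteq> {0..<N}" "card I = n"
    using permutes_image_prefix[OF assms(1) n(1)] unfolding I_def I_pi_def n_def by auto
  have "finite I" "Y ` I \<subseteq> {1..R}"
    using I(1) labels_in_range finite_subset by auto
  then have m_sum: "n = (\<Sum>r=1..R. m r)"
    using sum_card_label_classes I(2) unfolding m_def by metis
  have Od_Tw: "Od + Tw \<le> R"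
    using card_odd_add_card_eq_2_le[of "{1..R}" m] unfolding Od_def Tw_def by simp
  \<comment> \<open>the case of a vanishing denominator in \<open>omega_r_pi\<close> agrees with \<open>x / 0 = 0\<close>\<close>
  have omega: "omega_r_pi N k R Y \<pi> r = real (m r div 2) / real (\<Sum>q=1..R. m q div 2)" for r
    unfolding omega_r_pi_def n_r_pi_def Let_def m_def I_def by simp
  have mismatch: "\<bar>\<Sum>r=1..R. (real (m r) / real n - omega_r_pi N k R Y \<pi> r) * U_split I r\<bar>
      \<le> B * real Od / (real n - real Od)"
    unfolding omega
  proof (rule abs_sum_frequency_minus_halved_weight_le[OF _ m_sum Od_def])
    show "Od < n" using Od_Tw n(4) by linarith
    show "0 \<le> U_split I r \<and> U_split I r \<le> B" for r
      by (rule avg_loss_contrastive_tuples_bounded)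
  qed simp
  have defect: "\<bar>exchange_defect I / (real n * real N)\<bar> \<le> 2 * B * (real Tw + 1) / real n"
    unfolding abs_divide
  proof (rule order_trans[OF _ scaled_defect_le[OF bound_nonneg _ n(1,2)]])
    show "0 < n" using n(4) by simp
    show "\<bar>exchange_defect I\<bar> \<le> 2 * B * real Tw * (real N - real n) + real n * B * real k"
      using abs_exchange_defect_le[OF I(1)] unfolding I(2) Tw_def m_def .
  qed simp
  have "B * real Od / (real n - real Od) + 2 * B * (real Tw + 1) / real n
      \<le> 2 * B * real R / (real n - real R)"
  proof (rule weight_defect_arith[OF bound_nonneg n(4) Od_Tw])
    show "even Od"
      using even_card_odd_if_even_sum[of "{1..R}" m] m_sum n(3) unfolding Od_def by simp
    show "n = 2 * R" if "Tw = R"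
      using sum_eq_if_all_eq_2[of "{1..R}" m] that m_sum unfolding Tw_def by simp
  qed
  then show ?thesis
    using mismatch defect unfolding m_def by (intro order_trans[OF abs_triangle_ineq4]) linarith
qed

lemma abs_sum_permutations_weight_defect_le:
  assumes "R < n_aux N k"
  shows "\<bar>\<Sum>\<pi>\<in>{\<pi>. \<pi> permutes {0..<N}}. \<Sum>r=1..R.
            (rho_hat N Y r - omega_r_pi N k R Y \<pi> r) * avg_loss phi f X (Omega_r_pi N k Y \<pi> r)\<bar>
    \<le> fact N * (2 * B * real R / (real (n_aux N k) - real R))"
proof -
  let ?Perms = "{\<pi>. \<pi> permutes {0..<N}}" and ?n = "n_aux N k"
  define weight_mismatch where "weight_mismatch \<pi> = (\<Sum>r=1..R. (real (card {z \<in> I_pi N k \<pi>. Y z = r}) / real ?n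
      - omega_r_pi N k R Y \<pi> r) * U_split (I_pi N k \<pi>) r)" for \<pi>
  define block_covariance where
    "block_covariance I = (\<Sum>x\<in>I. \<Sum>y\<in>{0..<N} - I. U_split I (Y x) - U_split I (Y y))" for I
  have n: "?n \<le> N" "0 < ?n" using n_aux_le assms by auto
  have per_perm: "(\<Sum>r=1..R. (rho_hat N Y r - omega_r_pi N k R Y \<pi> r) * avg_loss phi f X (Omega_r_pi N k Y \<pi> r))
      = weight_mismatch \<pi> - block_covariance (I_pi N k \<pi>) / (real ?n * real N)" if "\<pi> \<in> ?Perms" for \<pi>
  proof -
    have I: "I_pi N k \<pi> \<subseteq> {0..<N}" "card (I_pi N k \<pi>) = ?n"
      using permutes_image_prefix[of \<pi> N ?n] that n(1) unfolding I_pi_def by auto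
    have "(\<Sum>r=1..R. (rho_hat N Y r - omega_r_pi N k R Y \<pi> r) * avg_loss phi f X (Omega_r_pi N k Y \<pi> r))
        = weight_mismatch \<pi> - (\<Sum>r=1..R. (real (card {z \<in> I_pi N k \<pi>. Y z = r}) / real ?n - rho_hat N Y r)
            * U_split (I_pi N k \<pi>) r)"
      unfolding weight_mismatch_def Omega_r_pi_eq_contrastive_tuples sum_subtractf[symmetric]
      by (intro sum.cong refl) (simp add: algebra_simps)
    then show ?thesis
      using sum_label_frequency_minus_rho_hat[OF I(1), of "U_split (I_pi N k \<pi>)"] I(2) n(2)
      unfolding block_covariance_def by simp
  qed
  have covariance: "(\<Sum>\<pi>\<in>?Perms. block_covariance (I_pi N k \<pi>))
      = (\<Sum>\<pi>\<in>?Perms. exchange_defect (I_pi N k \<pi>))"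
    unfolding block_covariance_def I_pi_def by (rule sum_permutations_label_covariance_eq[OF n(1)])
  have "(\<Sum>\<pi>\<in>?Perms. \<Sum>r=1..R.
      (rho_hat N Y r - omega_r_pi N k R Y \<pi> r) * avg_loss phi f X (Omega_r_pi N k Y \<pi> r))
      = (\<Sum>\<pi>\<in>?Perms. weight_mismatch \<pi> - block_covariance (I_pi N k \<pi>) / (real ?n * real N))"
    by (rule sum.cong[OF refl]) (rule per_perm)
  also have "\<dots> = (\<Sum>\<pi>\<in>?Perms. weight_mismatch \<pi> - exchange_defect (I_pi N k \<pi>) / (real ?n * real N))"
    using covariance by (simp add: sum_subtractf sum_divide_distrib[symmetric])
  finally have regrouped: "(\<Sum>\<pi>\<in>?Perms. \<Sum>r=1..R.
      (rho_hat N Y r - omega_r_pi N k R Y \<pi> r) * avg_loss phi f X (Omega_r_pi N k Y \<pi> r))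
      = (\<Sum>\<pi>\<in>?Perms. weight_mismatch \<pi> - exchange_defect (I_pi N k \<pi>) / (real ?n * real N))" .
  have "\<bar>\<Sum>\<pi>\<in>?Perms. weight_mismatch \<pi> - exchange_defect (I_pi N k \<pi>) / (real ?n * real N)\<bar>
      \<le> (\<Sum>\<pi>\<in>?Perms. 2 * B * real R / (real ?n - real R))"
    using abs_weight_mismatch_minus_defect_le[OF _ assms] unfolding weight_mismatch_def
    by (intro order_trans[OF sum_abs sum_mono]) simp
  then show ?thesis
    unfolding regrouped by (simp add: card_permutations)
qed

lemma abs_U_Omega_minus_U_bar_le:
  assumes "R < n_aux N k"
  shows "\<bar>U_Omega phi f N k R X Y - U_bar phi f N k R X Y\<bar>
    \<le> 2 * B * real R / (real (n_aux N k) - real R)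
      + (\<Sum>r=1..R. rho_hat N Y r * \<bar>avg_loss phi f X (Omega_r N k Y r) - U_perm_avg phi f N k X Y r\<bar>)"
proof -
  let ?Perms = "{\<pi>. \<pi> permutes {0..<N}}"
  let ?A = "\<lambda>r. avg_loss phi f X (Omega_r N k Y r)" and ?U = "\<lambda>r. U_perm_avg phi f N k X Y r"
  let ?V = "\<lambda>\<pi> r. avg_loss phi f X (Omega_r_pi N k Y \<pi> r)"
  define D where "D = (\<Sum>\<pi>\<in>?Perms. \<Sum>r=1..R. (rho_hat N Y r - omega_r_pi N k R Y \<pi> r) * ?V \<pi> r)"
  have "(\<Sum>r=1..R. rho_hat N Y r * ?U r) = (\<Sum>\<pi>\<in>?Perms. \<Sum>r=1..R. rho_hat N Y r * ?V \<pi> r) / fact N"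
    unfolding U_perm_avg_def by (simp add: sum_distrib_left sum_divide_distrib) (rule sum.swap)
  then have decomposition: "U_Omega phi f N k R X Y - U_bar phi f N k R X Y
      = (\<Sum>r=1..R. rho_hat N Y r * (?A r - ?U r)) + D / fact N"
    unfolding U_Omega_def U_bar_def D_def
    by (simp add: right_diff_distrib left_diff_distrib sum_subtractf diff_divide_distrib)
  have "\<bar>\<Sum>r=1..R. rho_hat N Y r * (?A r - ?U r)\<bar> \<le> (\<Sum>r=1..R. rho_hat N Y r * \<bar>?A r - ?U r\<bar>)"
    using sum_abs[of "\<lambda>r. rho_hat N Y r * (?A r - ?U r)" "{1..R}"] by (simp add: abs_mult rho_hat_def)
  moreover have "\<bar>D / fact N\<bar> \<le> 2 * B * real R / (real (n_aux N k) - real R)"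
    using abs_sum_permutations_weight_defect_le[OF assms] unfolding D_def
    by (simp add: abs_divide divide_le_eq mult.commute)
  ultimately show ?thesis
    unfolding decomposition by (intro order_trans[OF abs_triangle_ineq]) linarith
qed

end

theorem mainTheorem7:
  fixes F :: "('x \<Rightarrow> 'v::euclidean_space) set"
    and phi :: "real list \<Rightarrow> real"
    and N k R :: nat and B :: real
    and X :: "nat \<Rightarrow> 'x" and Y :: "nat \<Rightarrow> nat"
  assumes "R \<ge> 2" and "k \<ge> 1"
    and "F \<noteq> {}"
    and "\<And>v. length v = k \<Longrightarrow> phi v \<ge> 0"
    and "\<And>f x xp xs. f \<in> F \<Longrightarrow> length xs = k \<Longrightarrow>
           0 \<le> loss phi f x xp xs \<and> loss phi f x xp xs \<le> B"
    and "\<And>j. j < N \<Longrightarrow> Y j \<in> {1..R}"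
    and "n_aux N k > R"
  shows "(SUP f\<in>F. \<bar>U_Omega phi f N k R X Y - U_bar phi f N k R X Y\<bar>)
    \<le> 2 * B * real R / (real (n_aux N k) - real R)
      + (\<Sum>r=1..R. rho_hat N Y r *
           (SUP f\<in>F. \<bar>avg_loss phi f X (Omega_r N k Y r) - U_perm_avg phi f N k X Y r\<bar>))"
proof (rule cSUP_least[OF assms(3)])
  let ?dev = "\<lambda>f r. \<bar>avg_loss phi f X (Omega_r N k Y r) - U_perm_avg phi f N k X Y r\<bar>"
  have bdd: "bdd_above ((\<lambda>f. ?dev f r) ` F)" for r
  proof (rule bdd_aboveI2)
    fix g assume "g \<in> F"
    then interpret bounded_contrastive_loss phi g k B
      using assms(5) by unfold_locales blast
    show "?dev g r \<le> B" by (rule abs_avg_loss_Omega_r_minus_U_perm_avg_le)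
  qed
  fix f assume "f \<in> F"
  then interpret contrastive_sample phi f k B X N R Y
    using assms(5,6) by unfold_locales blast+
  have "?dev f r \<le> (SUP g\<in>F. ?dev g r)" for r
    using cSUP_upper[OF \<open>f \<in> F\<close> bdd] .
  then have "(\<Sum>r=1..R. rho_hat N Y r * ?dev f r) \<le> (\<Sum>r=1..R. rho_hat N Y r * (SUP g\<in>F. ?dev g r))"
    by (intro sum_mono mult_left_mono) (simp_all add: rho_hat_def)
  then show "\<bar>U_Omega phi f N k R X Y - U_bar phi f N k R X Y\<bar>
    \<le> 2 * B * real R / (real (n_aux N k) - real R) + (\<Sum>r=1..R. rho_hat N Y r * (SUP g\<in>F. ?dev g r))"
    using abs_U_Omega_minus_U_bar_le[OF assms(7)] by linarith
qed

end
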